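(* Let $k\ge 3$, let $G_1,\ldots,G_k$ be a finite sequence of pairwise disjoint connected graphs and let $x_i\in V(G_i)$. Let $G$ be the circuit of the graphs $\{G_i\}_{i=1}^k$ with respect to the vertices $\{x_i\}_{i=1}^k$. Then $$SO(G)\geq 2k\sqrt{2}+\sum_{i=1}^{k}SO(G_i),$$ and equality holds if and only if $G_i=K_1$ for every $1\le i\le k$.
   Context: All graphs are finite and simple. For a graph $H$, $SO(H)=\sum_{uv\in E(H)}\sqrt{d_u^2+d_v^2}$, where $d_u$ is the degree of $u$ in $H$ (the Sombor index). The circuit of $G_1,\ldots,G_k$ with respect to $x_1,\ldots,x_k$ is the graph obtained from the disjoint union of $G_1,\ldots,G_k$ and a cycle $C_k$ with vertices $c_1,\ldots,c_k$ in cyclic order, by identifying $x_i$ with $c_i$ for each $i$. *)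

theory Defs
  imports Complex_Main
begin

definition simple_graph :: "'a set \<Rightarrow> 'a set set \<Rightarrow> bool" where
  "simple_graph V E \<longleftrightarrow> finite V \<and>
     (\<forall>e\<in>E. \<exists>u v. e = {u, v} \<and> u \<noteq> v \<and> u \<in> V \<and> v \<in> V)"

definition degree :: "'a set set \<Rightarrow> 'a \<Rightarrow> nat" where
  "degree E v = card {e \<in> E. v \<in> e}"

definition connected_graph :: "'a set \<Rightarrow> 'a set set \<Rightarrow> bool" where
  "connected_graph V E \<longleftrightarrow> V \<noteq> {} \<and>
     (\<forall>u\<in>V. \<forall>v\<in>V. (\<lambda>a b. {a, b} \<in> E)\<^sup>*\<^sup>* u v)"

definition sombor :: "'a set set \<Rightarrow> real" where
  "sombor E = (\<Sum>e\<in>E. sqrt (\<Sum>v\<in>e. (real (degree E v))\<^sup>2))"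

text \<open>Circuit of G_0,...,G_(k-1) w.r.t. x_0,...,x_(k-1): disjoint union plus the
  cycle edges {x_i, x_(i+1 mod k)} (cycle vertex c_i identified with x_i).\<close>
definition circuit_vertices :: "nat \<Rightarrow> (nat \<Rightarrow> 'a set) \<Rightarrow> 'a set" where
  "circuit_vertices k V = (\<Union>i<k. V i)"

definition circuit_edges :: "nat \<Rightarrow> (nat \<Rightarrow> 'a set set) \<Rightarrow> (nat \<Rightarrow> 'a) \<Rightarrow> 'a set set" where
  "circuit_edges k E x = (\<Union>i<k. E i) \<union> {{x i, x ((i + 1) mod k)} | i. i < k}"

end

theory Submission
  imports Defs
begin

text \<open>Every edge of a component stays an edge of the circuit, and degrees can only grow, so the
  component edges contribute at least \<open>SO(G\<^sub>i)\<close>. Each of the \<open>k\<close> cycle edges joins two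
  roots whose degrees grew by exactly 2, so it contributes
  \<open>sqrt((d\<^sub>i + 2)\<^sup>2 + (d\<^sub>i\<^sub>+\<^sub>1 + 2)\<^sup>2) \<ge> sqrt 8 = 2 sqrt 2\<close>, with equality only if both
  roots have degree 0 in their components; a connected graph with an isolated vertex is \<open>K\<^sub>1\<close>.\<close>

definition sombor_weight :: "'a set set \<Rightarrow> 'a set \<Rightarrow> real" where
  "sombor_weight F e = sqrt (\<Sum>v\<in>e. (real (degree F v))\<^sup>2)"

lemma sombor_eq_sum_weight: "sombor E = (\<Sum>e\<in>E. sombor_weight E e)"
  by (simp add: sombor_def sombor_weight_def)

lemma simple_graph_edgeD:
  assumes "simple_graph V E" "e \<in> E"
  shows "e \<subseteq> V" "e \<noteq> {}"
proof -
  obtain a b where "e = {a, b}" "a \<in> V" "b \<in> V"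
    using assms unfolding simple_graph_def by blast
  then show "e \<subseteq> V" "e \<noteq> {}" by simp_all
qed

lemma simple_graph_finite_edges:
  assumes "simple_graph V E"
  shows "finite E"
proof -
  have "E \<subseteq> Pow V" using simple_graph_edgeD(1)[OF assms] by blast
  moreover have "finite V" using assms unfolding simple_graph_def by (rule conjunct1)
  ultimately show ?thesis by (meson finite_Pow_iff finite_subset)
qed

lemma degree_mono: "E \<subseteq> F \<Longrightarrow> finite F \<Longrightarrow> degree E v \<le> degree F v"
  unfolding degree_def by (rule card_mono) auto

lemma degree_eq_0_iff: "finite E \<Longrightarrow> degree E v = 0 \<longleftrightarrow> (\<forall>e\<in>E. v \<notin> e)"
  unfolding degree_def by auto

lemma sombor_le_sum_weight_supergraph:
  assumes "E \<subseteq> F" "finite F"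
  shows "sombor E \<le> (\<Sum>e\<in>E. sombor_weight F e)"
  unfolding sombor_eq_sum_weight sombor_weight_def
  by (intro sum_mono real_sqrt_le_mono power_mono) (simp_all add: assms degree_mono)

lemma connected_graph_isolated_vertex:
  assumes "simple_graph V E" "connected_graph V E" "u \<in> V" "degree E u = 0"
  shows "V = {u} \<and> E = {}"
proof -
  have isolated: "\<forall>e\<in>E. u \<notin> e"
    using assms(4) degree_eq_0_iff[OF simple_graph_finite_edges[OF assms(1)]] by blast
  have "v = u" if "v \<in> V" for v
  proof -
    have "(\<lambda>a b. {a, b} \<in> E)\<^sup>*\<^sup>* u v"
      using assms(2,3) that unfolding connected_graph_def by blast
    then show ?thesis
    proof (cases rule: converse_rtranclpE)
      case (step w)
      then show ?thesis using isolated by blast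
    qed simp
  qed
  then have "V = {u}" using assms(3) by blast
  moreover have "e \<notin> E" for e
  proof
    assume "e \<in> E"
    then obtain a b where "a \<noteq> b" "a \<in> V" "b \<in> V"
      using assms(1) unfolding simple_graph_def by blast
    then show False using \<open>V = {u}\<close> by blast
  qed
  ultimately show ?thesis by blast
qed

lemma sqrt_shifted_squares:
  fixes a b :: real
  assumes "0 \<le> a" "0 \<le> b"
  shows "2 * sqrt 2 \<le> sqrt ((a + 2)\<^sup>2 + (b + 2)\<^sup>2)"
    and "sqrt ((a + 2)\<^sup>2 + (b + 2)\<^sup>2) = 2 * sqrt 2 \<longleftrightarrow> a = 0 \<and> b = 0"
proof -
  have "2 * sqrt 2 = sqrt (2\<^sup>2 * 2)"
    by (simp only: real_sqrt_mult real_sqrt_abs abs_numeral)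
  then have sqrt_8: "2 * sqrt 2 = sqrt 8"
    by simp
  have expand: "(a + 2)\<^sup>2 + (b + 2)\<^sup>2 = 8 + a * (a + 4) + b * (b + 4)"
    by (simp add: power2_eq_square algebra_simps)
  have nonneg: "0 \<le> a * (a + 4)" "0 \<le> b * (b + 4)"
    using assms by simp_all
  have zero_iff: "a * (a + 4) = 0 \<longleftrightarrow> a = 0" "b * (b + 4) = 0 \<longleftrightarrow> b = 0"
    using assms by simp_all
  show "2 * sqrt 2 \<le> sqrt ((a + 2)\<^sup>2 + (b + 2)\<^sup>2)"
    unfolding sqrt_8 expand using nonneg by simp
  show "sqrt ((a + 2)\<^sup>2 + (b + 2)\<^sup>2) = 2 * sqrt 2 \<longleftrightarrow> a = 0 \<and> b = 0"
    unfolding sqrt_8 expand real_sqrt_eq_iff using nonneg zero_iff by linarith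
qed

lemma Suc_mod_neq_self: "2 \<le> (k::nat) \<Longrightarrow> i < k \<Longrightarrow> (i + 1) mod k \<noteq> i"
  by (cases "i + 1 < k") (auto simp: mod_if)

lemma Suc_mod_eq_iff: "i < (k::nat) \<Longrightarrow> j < k \<Longrightarrow> (j + 1) mod k = i \<longleftrightarrow> j = (i + k - 1) mod k"
  by (cases "j + 1 < k"; cases i) (auto simp: mod_if)

locale circuit =
  fixes k :: nat and V :: "nat \<Rightarrow> 'a set" and E :: "nat \<Rightarrow> 'a set set" and x :: "nat \<Rightarrow> 'a"
  assumes three_le_k: "3 \<le> k"
    and simple: "\<And>i. i < k \<Longrightarrow> simple_graph (V i) (E i)"
    and connected: "\<And>i. i < k \<Longrightarrow> connected_graph (V i) (E i)"
    and disjoint: "\<And>i j. i < k \<Longrightarrow> j < k \<Longrightarrow> i \<noteq> j \<Longrightarrow> V i \<inter> V j = {}"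
    and root_in: "\<And>i. i < k \<Longrightarrow> x i \<in> V i"
begin

definition cycle_edge :: "nat \<Rightarrow> 'a set" where
  "cycle_edge i = {x i, x ((i + 1) mod k)}"

abbreviation G :: "'a set set" where
  "G \<equiv> circuit_edges k E x"

lemma circuit_edges_eq: "G = (\<Union>i<k. E i) \<union> cycle_edge ` {..<k}"
  unfolding circuit_edges_def cycle_edge_def by blast

lemma Suc_mod_less: "(i + 1) mod k < k"
  using three_le_k by simp

lemma root_in_component_iff: "i < k \<Longrightarrow> j < k \<Longrightarrow> x i \<in> V j \<longleftrightarrow> i = j"
  using disjoint[of i j] root_in[of i] root_in[of j] by auto

lemma root_inj: "i < k \<Longrightarrow> j < k \<Longrightarrow> x i = x j \<Longrightarrow> i = j"
  using root_in_component_iff[of i j] root_in[of j] by simp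

lemma finite_component_edges: "i < k \<Longrightarrow> finite (E i)"
  using simple_graph_finite_edges[OF simple] .

lemma finite_circuit_edges: "finite G"
  unfolding circuit_edges_eq using finite_component_edges by simp

lemma component_edges_disjoint:
  assumes "i < k" "j < k" "i \<noteq> j"
  shows "E i \<inter> E j = {}"
proof -
  have "e \<subseteq> V i \<inter> V j" "e \<noteq> {}" if "e \<in> E i" "e \<in> E j" for e
    using simple_graph_edgeD[OF simple] assms that by blast+
  then show ?thesis
    using disjoint[OF assms] by blast
qed

lemma cycle_edge_notin_component: "i < k \<Longrightarrow> j < k \<Longrightarrow> cycle_edge i \<notin> E j"
proof
  assume i: "i < k" and j: "j < k" and "cycle_edge i \<in> E j"
  then have "cycle_edge i \<subseteq> V j"
    using simple_graph_edgeD(1)[OF simple[OF j]] by blast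
  then have "x i \<in> V j" "x ((i + 1) mod k) \<in> V j"
    unfolding cycle_edge_def by simp_all
  then have "i = j" "(i + 1) mod k = j"
    using root_in_component_iff i j Suc_mod_less by simp_all
  then show False
    using Suc_mod_neq_self[of k i] three_le_k i by simp
qed

lemma root_in_cycle_edge_iff:
  assumes "i < k" "j < k"
  shows "x i \<in> cycle_edge j \<longleftrightarrow> j = i \<or> j = (i + k - 1) mod k"
proof -
  have "x i \<in> cycle_edge j \<longleftrightarrow> j = i \<or> (j + 1) mod k = i"
    unfolding cycle_edge_def using root_inj assms Suc_mod_less by auto
  also have "\<dots> \<longleftrightarrow> j = i \<or> j = (i + k - 1) mod k"
    using Suc_mod_eq_iff assms by blast
  finally show ?thesis .
qed

text \<open>This fails for \<open>k = 2\<close>, where both cycle edges are the same set; it is where \<open>3 \<le> k\<close> is used.\<close>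
lemma inj_on_cycle_edge: "inj_on cycle_edge {..<k}"
proof (rule inj_onI)
  fix i j assume i: "i \<in> {..<k}" and j: "j \<in> {..<k}" and eq: "cycle_edge i = cycle_edge j"
  have "x i \<in> cycle_edge j" "x j \<in> cycle_edge i"
    using eq unfolding cycle_edge_def by auto
  then have "j = i \<or> j = (i + k - 1) mod k" "i = j \<or> i = (j + k - 1) mod k"
    using root_in_cycle_edge_iff i j by simp_all
  then show "i = j"
    using i j three_le_k by (cases i; cases j) (auto simp: mod_if split: if_splits)
qed

lemma edges_at_root:
  assumes i: "i < k"
  shows "{e \<in> G. x i \<in> e} = {e \<in> E i. x i \<in> e} \<union> {cycle_edge i, cycle_edge ((i + k - 1) mod k)}"
proof -
  have prev: "(i + k - 1) mod k < k"
    using three_le_k by simp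
  have "j = i" if j: "j < k" and e: "e \<in> E j" "x i \<in> e" for j e
    using simple_graph_edgeD(1)[OF simple[OF j] e(1)] e(2) root_in_component_iff[OF i j] by blast
  then have component_part: "{e \<in> (\<Union>j<k. E j). x i \<in> e} = {e \<in> E i. x i \<in> e}"
    using i by blast
  have "{j \<in> {..<k}. x i \<in> cycle_edge j} = {i, (i + k - 1) mod k}"
    using root_in_cycle_edge_iff[OF i] i prev by auto
  moreover have "{e \<in> cycle_edge ` {..<k}. x i \<in> e} = cycle_edge ` {j \<in> {..<k}. x i \<in> cycle_edge j}"
    by blast
  ultimately have cycle_part:
    "{e \<in> cycle_edge ` {..<k}. x i \<in> e} = {cycle_edge i, cycle_edge ((i + k - 1) mod k)}"
    by simp
  have "{e \<in> G. x i \<in> e} = {e \<in> (\<Union>j<k. E j). x i \<in> e} \<union> {e \<in> cycle_edge ` {..<k}. x i \<in> e}"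
    unfolding circuit_edges_eq by auto
  then show ?thesis
    unfolding component_part cycle_part .
qed

lemma degree_circuit_root:
  assumes i: "i < k"
  shows "degree G (x i) = degree (E i) (x i) + 2"
proof -
  have prev: "(i + k - 1) mod k < k" "(i + k - 1) mod k \<noteq> i"
    using i three_le_k by (auto simp: mod_if)
  then have "cycle_edge i \<noteq> cycle_edge ((i + k - 1) mod k)"
    using inj_on_eq_iff[OF inj_on_cycle_edge, of i "(i + k - 1) mod k"] i by simp
  moreover have "cycle_edge i \<notin> E i" "cycle_edge ((i + k - 1) mod k) \<notin> E i"
    using cycle_edge_notin_component i prev by simp_all
  ultimately show ?thesis
    unfolding degree_def edges_at_root[OF i] using finite_component_edges[OF i] by simp
qed

lemma sombor_circuit_split:
  "sombor G = (\<Sum>i<k. \<Sum>e\<in>E i. sombor_weight G e) + (\<Sum>i<k. sombor_weight G (cycle_edge i))"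
proof -
  have disj: "(\<Union>i<k. E i) \<inter> cycle_edge ` {..<k} = {}"
    using cycle_edge_notin_component by blast
  have "sombor G = (\<Sum>e\<in>(\<Union>i<k. E i). sombor_weight G e) + (\<Sum>e\<in>cycle_edge ` {..<k}. sombor_weight G e)"
    unfolding sombor_eq_sum_weight circuit_edges_eq
    by (rule sum.union_disjoint) (simp_all add: finite_component_edges disj)
  also have "(\<Sum>e\<in>(\<Union>i<k. E i). sombor_weight G e) = (\<Sum>i<k. \<Sum>e\<in>E i. sombor_weight G e)"
    by (rule sum.UNION_disjoint) (simp_all add: finite_component_edges component_edges_disjoint)
  also have "(\<Sum>e\<in>cycle_edge ` {..<k}. sombor_weight G e) = (\<Sum>i<k. sombor_weight G (cycle_edge i))"
    by (rule sum.reindex_cong[OF inj_on_cycle_edge]) simp_all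
  finally show ?thesis .
qed

lemma component_edges_subset: "i < k \<Longrightarrow> E i \<subseteq> G"
  unfolding circuit_edges_def by blast

lemma sum_sombor_components_le: "(\<Sum>i<k. sombor (E i)) \<le> (\<Sum>i<k. \<Sum>e\<in>E i. sombor_weight G e)"
  by (rule sum_mono) (simp add: sombor_le_sum_weight_supergraph component_edges_subset finite_circuit_edges)

lemma sombor_weight_cycle_edge:
  assumes i: "i < k"
  shows "sombor_weight G (cycle_edge i) =
    sqrt ((real (degree (E i) (x i)) + 2)\<^sup>2 + (real (degree (E ((i + 1) mod k)) (x ((i + 1) mod k))) + 2)\<^sup>2)"
proof -
  have "x i \<noteq> x ((i + 1) mod k)"
  proof
    assume "x i = x ((i + 1) mod k)"
    then have "i = (i + 1) mod k"
      by (rule root_inj[OF i Suc_mod_less])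
    then show False
      using Suc_mod_neq_self[of k i] three_le_k i by simp
  qed
  then show ?thesis
    unfolding sombor_weight_def cycle_edge_def
    using degree_circuit_root[OF i] degree_circuit_root[OF Suc_mod_less] by (simp add: add.commute)
qed

lemma two_sqrt_two_le_sombor_weight_cycle_edge: "i < k \<Longrightarrow> 2 * sqrt 2 \<le> sombor_weight G (cycle_edge i)"
  by (simp add: sombor_weight_cycle_edge sqrt_shifted_squares(1))

lemma root_degree_eq_0_iff:
  assumes "i < k"
  shows "degree (E i) (x i) = 0 \<longleftrightarrow> V i = {x i} \<and> E i = {}"
proof
  show "degree (E i) (x i) = 0 \<Longrightarrow> V i = {x i} \<and> E i = {}"
    using connected_graph_isolated_vertex[OF simple[OF assms] connected[OF assms] root_in[OF assms]] .
  show "V i = {x i} \<and> E i = {} \<Longrightarrow> degree (E i) (x i) = 0"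
    by (simp add: degree_def)
qed

lemma sombor_weight_cycle_edges_eq_iff:
  "(\<forall>i<k. sombor_weight G (cycle_edge i) = 2 * sqrt 2) \<longleftrightarrow> (\<forall>i<k. V i = {x i} \<and> E i = {})"
proof -
  have "(\<forall>i<k. sombor_weight G (cycle_edge i) = 2 * sqrt 2) \<longleftrightarrow>
      (\<forall>i<k. degree (E i) (x i) = 0 \<and> degree (E ((i + 1) mod k)) (x ((i + 1) mod k)) = 0)"
    by (simp add: sombor_weight_cycle_edge sqrt_shifted_squares(2))
  also have "\<dots> \<longleftrightarrow> (\<forall>i<k. degree (E i) (x i) = 0)"
    using Suc_mod_less by auto
  also have "\<dots> \<longleftrightarrow> (\<forall>i<k. V i = {x i} \<and> E i = {})"
    using root_degree_eq_0_iff by simp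
  finally show ?thesis .
qed

lemma sombor_circuit_ge: "2 * real k * sqrt 2 + (\<Sum>i<k. sombor (E i)) \<le> sombor G"
proof -
  have "(\<Sum>i<k. 2 * sqrt 2) \<le> (\<Sum>i<k. sombor_weight G (cycle_edge i))"
    by (rule sum_mono) (simp add: two_sqrt_two_le_sombor_weight_cycle_edge)
  then show ?thesis
    using sombor_circuit_split sum_sombor_components_le by simp
qed

lemma sombor_circuit_eq_iff:
  "sombor G = 2 * real k * sqrt 2 + (\<Sum>i<k. sombor (E i)) \<longleftrightarrow> (\<forall>i<k. V i = {x i} \<and> E i = {})"
proof
  assume "sombor G = 2 * real k * sqrt 2 + (\<Sum>i<k. sombor (E i))"
  moreover have "(\<Sum>i<k. 2 * sqrt 2) \<le> (\<Sum>i<k. sombor_weight G (cycle_edge i))"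
    by (rule sum_mono) (simp add: two_sqrt_two_le_sombor_weight_cycle_edge)
  ultimately have "(\<Sum>i<k. 2 * sqrt 2) = (\<Sum>i<k. sombor_weight G (cycle_edge i))"
    using sombor_circuit_split sum_sombor_components_le by simp
  then have "2 * sqrt 2 = sombor_weight G (cycle_edge i)" if "i < k" for i
    by (rule sum_mono_inv) (simp_all add: that two_sqrt_two_le_sombor_weight_cycle_edge)
  then show "\<forall>i<k. V i = {x i} \<and> E i = {}"
    using sombor_weight_cycle_edges_eq_iff by simp
next
  assume trivial: "\<forall>i<k. V i = {x i} \<and> E i = {}"
  then have "(\<Sum>i<k. sombor_weight G (cycle_edge i)) = 2 * real k * sqrt 2"
    using sombor_weight_cycle_edges_eq_iff by simp
  moreover have "(\<Sum>i<k. \<Sum>e\<in>E i. sombor_weight G e) = 0" "(\<Sum>i<k. sombor (E i)) = 0"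
    using trivial by (simp_all add: sombor_def)
  ultimately show "sombor G = 2 * real k * sqrt 2 + (\<Sum>i<k. sombor (E i))"
    using sombor_circuit_split by simp
qed

end

theorem mainTheorem4:
  fixes k :: nat and V :: "nat \<Rightarrow> 'a set" and E :: "nat \<Rightarrow> 'a set set" and x :: "nat \<Rightarrow> 'a"
  assumes "k \<ge> 3"
    and "\<And>i. i < k \<Longrightarrow> simple_graph (V i) (E i)"
    and "\<And>i. i < k \<Longrightarrow> connected_graph (V i) (E i)"
    and "\<And>i j. i < k \<Longrightarrow> j < k \<Longrightarrow> i \<noteq> j \<Longrightarrow> V i \<inter> V j = {}"
    and "\<And>i. i < k \<Longrightarrow> x i \<in> V i"
  shows "sombor (circuit_edges k E x) \<ge> 2 * real k * sqrt 2 + (\<Sum>i<k. sombor (E i)) \<and>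
         (sombor (circuit_edges k E x) = 2 * real k * sqrt 2 + (\<Sum>i<k. sombor (E i))
         \<longleftrightarrow> (\<forall>i<k. V i = {x i} \<and> E i = {}))"
proof -
  interpret circuit k V E x
    using assms by unfold_locales
  show ?thesis
    using sombor_circuit_ge sombor_circuit_eq_iff by simp
qed

end
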